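(* Let $U$ be a Banach space with a normalized unconditional basis $(u_j)_{j=1}^\infty$ whose normalized associated coordinate functionals $(u_j^* )$ form an unconditional weak$^*$ Schauder basis of $U^*$, and suppose $U^*$ with $(u_j^* )$ satisfies condition (C). Let $1\le p\le\infty$, let $\Lambda_i\subset\mathbb{N}$, $i\in\mathbb{N}$, be infinite sets, let $\varphi\in(\ell^p(U^* ))^*$ and $\eta>0$. Then there exist infinite sets $\mathcal{J}_i\subset\Lambda_i$, $i\in\mathbb{N}$, such that $$\sup_{\|y\|_{\ell^p(U^* )}\le1}|\langle\varphi,R_{\{i\}\times\mathcal{J}_i}y\rangle|\le\eta\qquad\text{for all } i\in\mathbb{N}.$$
   Context: Weak$^*$ Schauder basis: coordinate functionals $(u_j^* )$ of $(u_j)$ with $x^*=\text{weak}^*\text{-}\lim_n\sum_{j=1}^n\langle x^*,u_j\rangle u_j^*$ for all $x^*\in U^*$. Unconditional with constant $K_u$ as usual. For $\mathcal{A}\subset\mathbb{N}$, $P_{\mathcal{A}}(\sum_ja_ju_j^* )=\sum_{j\in\mathcal{A}}a_ju_j^*$ (weak$^*$ convergent series). Condition (C): for every infinite $\Lambda\subset\mathbb{N}$ and $\theta>0$ there is a sequence $(\mathcal{A}_j)$ of pairwise disjoint infinite subsets of $\Lambda$ such that for every $(x_j^* )\subset U^*$ with $\|x_j^*\|\le1$ there are scalars $(a_j)\in\ell^1$, $\|(a_j)\|_{\ell^1}=1$, with $\|\sum_ja_jP_{\mathcal{A}_j}x_j^*\|_{U^*}\le\theta$. $\ell^p(U^* )$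 is the $\ell^p$-sum of copies of $U^*$. For $i\in\mathbb{N}$ and $\mathcal{J}\subset\mathbb{N}$, $R_{\{i\}\times\mathcal{J}}:\ell^p(U^* )\to\ell^p(U^* )$ maps $y=(y_n)_n$ to the sequence whose $i$-th coordinate is $P_{\mathcal{J}}y_i$ and whose other coordinates are $0$. *)

theory Defs
  imports "HOL-Analysis.Analysis"
begin

(* Real scalars. The dual space U* is modelled as the Banach space of bounded
linear functionals 'u =>L real with the operator norm. *)

definition biorthogonal :: "(nat \<Rightarrow> 'u::real_normed_vector) \<Rightarrow> (nat \<Rightarrow> 'u \<Rightarrow>\<^sub>L real) \<Rightarrow> bool" where
  "biorthogonal u us \<longleftrightarrow>
     (\<forall>i j. blinfun_apply (us i) (u j) = (if i = j then 1 else 0))"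

definition unconditional_basis :: "(nat \<Rightarrow> 'u::real_normed_vector) \<Rightarrow> (nat \<Rightarrow> 'u \<Rightarrow>\<^sub>L real) \<Rightarrow> bool" where
  "unconditional_basis u us \<longleftrightarrow> biorthogonal u us \<and>
     (\<forall>x. ((\<lambda>j. blinfun_apply (us j) x *\<^sub>R u j) has_sum x) UNIV)"

definition weak_star_schauder_basis :: "(nat \<Rightarrow> 'u::real_normed_vector) \<Rightarrow> (nat \<Rightarrow> 'u \<Rightarrow>\<^sub>L real) \<Rightarrow> bool" where
  "weak_star_schauder_basis u us \<longleftrightarrow>
     (\<forall>xs::'u \<Rightarrow>\<^sub>L real. \<forall>x.
        (\<lambda>j. blinfun_apply xs (u j) * blinfun_apply (us j) x) sums blinfun_apply xs x)"

definition weak_star_unconditional :: "(nat \<Rightarrow> 'u::real_normed_vector) \<Rightarrow> (nat \<Rightarrow> 'u \<Rightarrow>\<^sub>L real) \<Rightarrow> bool" where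
  "weak_star_unconditional u us \<longleftrightarrow>
     (\<forall>xs::'u \<Rightarrow>\<^sub>L real. \<forall>x.
        ((\<lambda>j. blinfun_apply xs (u j) * blinfun_apply (us j) x) has_sum blinfun_apply xs x) UNIV)"

definition dual_proj :: "(nat \<Rightarrow> 'u::real_normed_vector) \<Rightarrow> (nat \<Rightarrow> 'u \<Rightarrow>\<^sub>L real) \<Rightarrow> nat set
     \<Rightarrow> ('u \<Rightarrow>\<^sub>L real) \<Rightarrow> ('u \<Rightarrow>\<^sub>L real)" where
  "dual_proj u us A xs = (THE ys. \<forall>x.
      (\<lambda>j. if j \<in> A then blinfun_apply xs (u j) * blinfun_apply (us j) x else 0)
        sums blinfun_apply ys x)"

definition condition_C :: "(nat \<Rightarrow> 'u::real_normed_vector) \<Rightarrow> (nat \<Rightarrow> 'u \<Rightarrow>\<^sub>L real) \<Rightarrow> bool" where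
  "condition_C u us \<longleftrightarrow>
     (\<forall>\<Lambda>::nat set. \<forall>\<theta>::real. infinite \<Lambda> \<and> \<theta> > 0 \<longrightarrow>
       (\<exists>A :: nat \<Rightarrow> nat set. (\<forall>j. A j \<subseteq> \<Lambda> \<and> infinite (A j)) \<and> disjoint_family A \<and>
         (\<forall>xs :: nat \<Rightarrow> ('u \<Rightarrow>\<^sub>L real). (\<forall>j. norm (xs j) \<le> 1) \<longrightarrow>
            (\<exists>(a :: nat \<Rightarrow> real) s. summable (\<lambda>j. \<bar>a j\<bar>) \<and> (\<Sum>j. \<bar>a j\<bar>) = 1 \<and>
               (\<lambda>j. a j *\<^sub>R dual_proj u us (A j) (xs j)) sums s \<and> norm s \<le> \<theta>))))"

definition lp_space :: "ereal \<Rightarrow> (nat \<Rightarrow> 'a::real_normed_vector) set" where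
  "lp_space p = {y. if p = \<infinity> then bounded (range (\<lambda>n. norm (y n)))
                    else summable (\<lambda>n. norm (y n) powr real_of_ereal p)}"

definition lp_norm :: "ereal \<Rightarrow> (nat \<Rightarrow> 'a::real_normed_vector) \<Rightarrow> real" where
  "lp_norm p y = (if p = \<infinity> then (SUP n. norm (y n))
                  else (\<Sum>n. norm (y n) powr real_of_ereal p) powr (1 / real_of_ereal p))"

definition lp_dual :: "ereal \<Rightarrow> ((nat \<Rightarrow> 'a::real_normed_vector) \<Rightarrow> real) \<Rightarrow> bool" where
  "lp_dual p \<phi> \<longleftrightarrow>
     (\<forall>y\<in>lp_space p. \<forall>z\<in>lp_space p. \<phi> (\<lambda>n. y n + z n) = \<phi> y + \<phi> z) \<and>
     (\<forall>y\<in>lp_space p. \<forall>c. \<phi> (\<lambda>n. c *\<^sub>R y n) = c * \<phi> y) \<and>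
     (\<exists>C. \<forall>y\<in>lp_space p. \<bar>\<phi> y\<bar> \<le> C * lp_norm p y)"

definition R_op :: "(nat \<Rightarrow> 'u::real_normed_vector) \<Rightarrow> (nat \<Rightarrow> 'u \<Rightarrow>\<^sub>L real) \<Rightarrow> nat \<Rightarrow> nat set
     \<Rightarrow> (nat \<Rightarrow> ('u \<Rightarrow>\<^sub>L real)) \<Rightarrow> (nat \<Rightarrow> ('u \<Rightarrow>\<^sub>L real))" where
  "R_op u us i J y = (\<lambda>n. if n = i then dual_proj u us J (y i) else 0)"

end

theory Submission
  imports Defs
begin

text \<open>
  Fix \<open>i\<close> and let \<open>\<psi> z = \<phi> (lp_single i z)\<close>, a bounded functional on \<open>U\<^sup>*\<close>. By uniform boundedness
  the projections \<open>P\<^sub>B\<close>, \<open>B \<subseteq> \<nat>\<close>, are bounded by a common constant \<open>K\<close>. Apply condition (C) to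
  \<open>\<Lambda> i\<close> with a small \<open>\<theta>\<close>. If no block \<open>A\<^sub>j\<close> worked, there would be unit vectors \<open>x\<^sub>j\<close> with
  \<open>\<psi> (P\<^bsub>A\<^sub>j\<^esub> x\<^sub>j) > \<eta>\<close>, and (C) gives \<open>\<parallel>\<Sum> a\<^sub>j P\<^bsub>A\<^sub>j\<^esub> x\<^sub>j\<parallel> \<le> \<theta>\<close> with \<open>\<Sum> \<bar>a\<^sub>j\<bar> = 1\<close>. Since the blocks are disjoint,
  \<open>T = P\<^sub>B - P\<^sub>D\<close> (\<open>B\<close>, \<open>D\<close> the unions of the blocks with \<open>a\<^sub>j > 0\<close> resp. \<open>a\<^sub>j \<le> 0\<close>) turns the sum into
  \<open>\<Sum> \<bar>a\<^sub>j\<bar> P\<^bsub>A\<^sub>j\<^esub> x\<^sub>j\<close>, whence \<open>\<eta> \<le> \<psi> (T s) \<le> 2 K \<parallel>\<psi>\<parallel> \<theta> < \<eta>\<close>.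
\<close>

lemma uniform_boundedness_ball:
  fixes T :: "'i \<Rightarrow> 'a::banach \<Rightarrow> 'b::real_normed_vector"
  assumes bl: "\<And>i. bounded_linear (T i)" and pointwise: "\<And>x. \<exists>M. \<forall>i. norm (T i x) \<le> M"
  obtains x0 r n where "\<And>i x. x \<in> ball x0 r \<Longrightarrow> norm (T i x) \<le> real n" "r > 0"
proof -
  define E where "E n = {x. \<forall>i. norm (T i x) \<le> real n}" for n :: nat
  have closed_E: "closedin euclidean (E n)" for n
  proof -
    have "E n = (\<Inter>i. {x. norm (T i x) \<le> real n})" by (auto simp: E_def)
    moreover have "closed {x. norm (T i x) \<le> real n}" for i
      by (intro closed_Collect_le continuous_intros linear_continuous_on bl continuous_on_norm)
    ultimately show ?thesis by auto
  qed
  have E_cover: "\<Union>(range E) = UNIV"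
  proof safe
    fix x
    obtain M where "\<forall>i. norm (T i x) \<le> M" using pointwise by blast
    moreover obtain n where "M \<le> real n" using real_arch_simple by blast
    ultimately show "x \<in> \<Union>(range E)" by (auto simp: E_def intro: order_trans)
  qed auto
  have "\<exists>n. euclidean interior_of (E n) \<noteq> {}"
  proof (rule ccontr)
    assume "\<nexists>n. euclidean interior_of (E n) \<noteq> {}"
    then have "euclidean interior_of \<Union>(range E) = {}"
      using closed_E completely_metrizable_space_euclidean by (intro Baire_category_alt) auto
    then show False using E_cover by simp
  qed
  then obtain n x0 where "x0 \<in> euclidean interior_of (E n)" by blast
  then obtain S where S: "openin euclidean S" "x0 \<in> S" "S \<subseteq> E n"
    unfolding interior_of_def by blast
  then have "open S" by simp
  then obtain r where r: "r > 0" "ball x0 r \<subseteq> S"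
    using S(2) open_contains_ball by blast
  then have "ball x0 r \<subseteq> E n" using S(3) by blast
  then show thesis using r(1) by (intro that[of x0 r n]) (auto simp: E_def)
qed

theorem uniform_boundedness:
  fixes T :: "'i \<Rightarrow> 'a::banach \<Rightarrow> 'b::real_normed_vector"
  assumes bl: "\<And>i. bounded_linear (T i)" and pointwise: "\<And>x. \<exists>M. \<forall>i. norm (T i x) \<le> M"
  shows "\<exists>K\<ge>0. \<forall>i x. norm (T i x) \<le> K * norm x"
proof -
  obtain x0 r n where ball: "\<And>i x. x \<in> ball x0 r \<Longrightarrow> norm (T i x) \<le> real n" and r: "r > 0"
    using uniform_boundedness_ball[OF assms] by blast
  have "norm (T i x) \<le> 4 * real n / r * norm x" for i x
  proof (cases "x = 0")
    case True
    then show ?thesis using linear_0[OF bounded_linear.linear[OF bl]] by simp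
  next
    case False
    define c where "c = r / (2 * norm x)"
    have c: "c > 0" using False r by (simp add: c_def)
    have "norm (c *\<^sub>R x) = r / 2" using False r by (simp add: c_def)
    then have "norm (T i (x0 + c *\<^sub>R x)) \<le> real n"
      using r by (intro ball) (simp add: dist_norm)
    moreover have "norm (T i x0) \<le> real n" using r by (intro ball) simp
    moreover have "c * norm (T i x) \<le> norm (T i (x0 + c *\<^sub>R x)) + norm (T i x0)"
    proof -
      have "T i (x0 + c *\<^sub>R x) = T i x0 + c *\<^sub>R T i x"
        using bl[of i] by (simp add: linear_add linear_scale bounded_linear.linear)
      then show ?thesis
        using norm_triangle_ineq4[of "T i (x0 + c *\<^sub>R x)" "T i x0"] c by simp
    qed
    ultimately have "c * norm (T i x) \<le> 2 * real n" by linarith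
    then have "norm (T i x) \<le> 2 * real n / c" using c by (simp add: field_simps)
    also have "\<dots> = 4 * real n / r * norm x" using False r by (simp add: c_def field_simps)
    finally show ?thesis .
  qed
  then show ?thesis using r by (intro exI[of _ "4 * real n / r"]) auto
qed

lemma has_sum_finite_sums_bounded:
  fixes f :: "'a \<Rightarrow> 'b::real_normed_vector"
  assumes "(f has_sum s) A"
  shows "\<exists>M. \<forall>G. finite G \<and> G \<subseteq> A \<longrightarrow> norm (sum f G) \<le> M"
proof -
  have "eventually (\<lambda>F. dist (sum f F) s < 1) (finite_subsets_at_top A)"
    using assms unfolding has_sum_def by (rule tendstoD) simp
  then obtain X where X: "finite X" "X \<subseteq> A"
    and near: "\<And>Y. finite Y \<Longrightarrow> X \<subseteq> Y \<Longrightarrow> Y \<subseteq> A \<Longrightarrow> dist (sum f Y) s < 1"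
    by (auto simp: eventually_finite_subsets_at_top)
  have "norm (sum f G) \<le> norm s + 1 + (\<Sum>j\<in>X. norm (f j))" if G: "finite G" "G \<subseteq> A" for G
  proof -
    have "sum f (G \<union> X) = sum f G + sum f (X - G)"
      using G X sum.union_disjoint[of G "X - G" f] by (simp add: Un_Diff_cancel)
    then have split: "sum f G = sum f (G \<union> X) - sum f (X - G)" by simp
    have "norm (sum f (G \<union> X)) \<le> norm s + 1"
      using near[of "G \<union> X"] G X norm_triangle_ineq2[of "sum f (G \<union> X)" s]
      by (auto simp: dist_norm)
    moreover have "norm (sum f (X - G)) \<le> (\<Sum>j\<in>X. norm (f j))"
      using X norm_sum[of f "X - G"] sum_mono2[of X "X - G" "\<lambda>j. norm (f j)"] by auto
    ultimately show ?thesis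
      unfolding split using norm_triangle_ineq4[of "sum f (G \<union> X)" "sum f (X - G)"] by simp
  qed
  then show ?thesis by blast
qed

text \<open>The coordinate projection \<open>Q\<^sub>B\<close> on \<open>U\<close>; the dual projection \<open>P\<^sub>B\<close> is its adjoint.\<close>

definition basis_proj :: "(nat \<Rightarrow> 'u::real_normed_vector) \<Rightarrow> (nat \<Rightarrow> 'u \<Rightarrow>\<^sub>L real) \<Rightarrow> nat set \<Rightarrow> 'u \<Rightarrow> 'u" where
  "basis_proj u us B x = (\<Sum>\<^sub>\<infinity>j\<in>B. blinfun_apply (us j) x *\<^sub>R u j)"

context
  fixes u :: "nat \<Rightarrow> 'u::banach" and us :: "nat \<Rightarrow> ('u \<Rightarrow>\<^sub>L real)"
  assumes basis: "unconditional_basis u us"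
begin

lemma basis_expansion_has_sum: "((\<lambda>j. blinfun_apply (us j) x *\<^sub>R u j) has_sum x) UNIV"
  using basis by (simp add: unconditional_basis_def)

lemma basis_expansion_summable_on: "(\<lambda>j. blinfun_apply (us j) x *\<^sub>R u j) summable_on B"
  using basis_expansion_has_sum[of x] summable_on_subset_banach[of _ UNIV B]
  by (auto simp: summable_on_def)

lemma basis_proj_has_sum: "((\<lambda>j. blinfun_apply (us j) x *\<^sub>R u j) has_sum basis_proj u us B x) B"
  unfolding basis_proj_def using basis_expansion_summable_on by (rule has_sum_infsum)

lemma finite_basis_sums_uniformly_bounded:
  "\<exists>K\<ge>0. \<forall>F x. finite F \<longrightarrow> norm (\<Sum>j\<in>F. blinfun_apply (us j) x *\<^sub>R u j) \<le> K * norm x"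
proof -
  define T where "T F x = (if finite F then \<Sum>j\<in>F. blinfun_apply (us j) x *\<^sub>R u j else 0)" for F x
  have "bounded_linear (T F)" for F
    unfolding T_def
    by (cases "finite F") (auto intro!: bounded_linear_sum bounded_linear_scaleR_left
          bounded_linear_compose[OF _ blinfun.bounded_linear_right] bounded_linear_zero)
  moreover have "\<exists>M. \<forall>F. norm (T F x) \<le> M" for x
  proof -
    obtain M where "\<forall>G. finite G \<longrightarrow> norm (\<Sum>j\<in>G. blinfun_apply (us j) x *\<^sub>R u j) \<le> M"
      using has_sum_finite_sums_bounded[OF basis_expansion_has_sum[of x]] by blast
    then show ?thesis by (intro exI[of _ "max M 0"]) (auto simp: T_def)
  qed
  ultimately obtain K where "K \<ge> 0" "\<forall>F x. norm (T F x) \<le> K * norm x"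
    using uniform_boundedness[of T] by blast
  then show ?thesis by (intro exI[of _ K]) (auto simp: T_def split: if_splits)
qed

lemma basis_proj_uniformly_bounded: "\<exists>K\<ge>0. \<forall>B x. norm (basis_proj u us B x) \<le> K * norm x"
proof -
  obtain K where K: "K \<ge> 0"
    and finite_sums: "\<And>F x. finite F \<Longrightarrow> norm (\<Sum>j\<in>F. blinfun_apply (us j) x *\<^sub>R u j) \<le> K * norm x"
    using finite_basis_sums_uniformly_bounded by blast
  have "norm (basis_proj u us B x) \<le> K * norm x" for B x
  proof (rule tendsto_upperbound)
    show "((\<lambda>F. norm (\<Sum>j\<in>F. blinfun_apply (us j) x *\<^sub>R u j)) \<longlongrightarrow> norm (basis_proj u us B x))
        (finite_subsets_at_top B)"
      using basis_proj_has_sum[of x B] unfolding has_sum_def by (rule tendsto_norm)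
  qed (auto intro!: eventually_finite_subsets_at_top_weakI finite_sums)
  then show ?thesis using K by blast
qed

lemma bounded_linear_basis_proj: "bounded_linear (basis_proj u us B)"
proof -
  obtain K where "\<forall>B x. norm (basis_proj u us B x) \<le> K * norm x"
    using basis_proj_uniformly_bounded by blast
  moreover have "basis_proj u us B (x + y) = basis_proj u us B x + basis_proj u us B y" for x y
    unfolding basis_proj_def
    by (simp add: blinfun.add_right scaleR_add_left
        infsum_add[OF basis_expansion_summable_on basis_expansion_summable_on])
  moreover have "basis_proj u us B (c *\<^sub>R x) = c *\<^sub>R basis_proj u us B x" for c x
    unfolding basis_proj_def by (simp add: blinfun.scaleR_right infsum_scaleR_right[symmetric])
  ultimately show ?thesis
    by (intro bounded_linear_intro[of _ K]) (auto simp: mult.commute)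
qed

lemma coordinate_basis_proj:
  "blinfun_apply (us k) (basis_proj u us B x) = (if k \<in> B then blinfun_apply (us k) x else 0)"
proof -
  have "biorthogonal u us" using basis by (simp add: unconditional_basis_def)
  then have coord: "blinfun_apply (us k) (blinfun_apply (us j) x *\<^sub>R u j)
      = (if j = k then blinfun_apply (us k) x else 0)" for j
    by (simp add: biorthogonal_def blinfun.scaleR_right)
  have "((\<lambda>j. blinfun_apply (us k) (blinfun_apply (us j) x *\<^sub>R u j))
      has_sum blinfun_apply (us k) (basis_proj u us B x)) B"
    by (rule has_sum_bounded_linear[OF blinfun.bounded_linear_right basis_proj_has_sum])
  then have "((\<lambda>j. if j = k then blinfun_apply (us k) x else 0)
      has_sum blinfun_apply (us k) (basis_proj u us B x)) B"
    by (simp only: coord)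
  moreover have "((\<lambda>j. if j = k then blinfun_apply (us k) x else 0)
      has_sum (if k \<in> B then blinfun_apply (us k) x else 0)) (B \<inter> {k})"
    by (rule has_sum_finiteI) auto
  then have "((\<lambda>j. if j = k then blinfun_apply (us k) x else 0)
      has_sum (if k \<in> B then blinfun_apply (us k) x else 0)) B"
    by (subst has_sum_cong_neutral[where T="B \<inter> {k}"]) auto
  ultimately show ?thesis by (rule has_sum_unique)
qed

lemma basis_proj_basis_proj: "basis_proj u us A (basis_proj u us B x) = basis_proj u us (A \<inter> B) x"
proof -
  have "basis_proj u us A (basis_proj u us B x)
      = (\<Sum>\<^sub>\<infinity>j\<in>A. (if j \<in> B then blinfun_apply (us j) x else 0) *\<^sub>R u j)"
    unfolding basis_proj_def[of u us A] by (simp add: coordinate_basis_proj)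
  also have "\<dots> = basis_proj u us (A \<inter> B) x"
    unfolding basis_proj_def by (rule infsum_cong_neutral) auto
  finally show ?thesis .
qed

lemma dual_proj_apply: "blinfun_apply (dual_proj u us B xs) x = blinfun_apply xs (basis_proj u us B x)"
proof -
  define P where "P = Blinfun (\<lambda>x. blinfun_apply xs (basis_proj u us B x))"
  have P_apply: "blinfun_apply P x = blinfun_apply xs (basis_proj u us B x)" for x
    unfolding P_def
    by (simp add: bounded_linear_Blinfun_apply
        bounded_linear_compose[OF blinfun.bounded_linear_right bounded_linear_basis_proj])
  have expansion: "(\<lambda>j. if j \<in> B then blinfun_apply xs (u j) * blinfun_apply (us j) x else 0)
      sums blinfun_apply P x" for x
  proof -
    have "((\<lambda>j. blinfun_apply xs (blinfun_apply (us j) x *\<^sub>R u j)) has_sum blinfun_apply P x) B"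
      unfolding P_apply by (rule has_sum_bounded_linear[OF blinfun.bounded_linear_right basis_proj_has_sum])
    then have "((\<lambda>j. if j \<in> B then blinfun_apply xs (u j) * blinfun_apply (us j) x else 0)
        has_sum blinfun_apply P x) UNIV"
      by (subst has_sum_cong_neutral[where T=B]) (auto simp: blinfun.scaleR_right)
    then show ?thesis by (rule has_sum_imp_sums)
  qed
  have "dual_proj u us B xs = P"
    unfolding dual_proj_def
  proof (rule the_equality)
    fix ys
    assume "\<forall>x. (\<lambda>j. if j \<in> B then blinfun_apply xs (u j) * blinfun_apply (us j) x else 0)
        sums blinfun_apply ys x"
    then show "ys = P" using expansion by (intro blinfun_eqI) (blast intro: sums_unique2)
  qed (use expansion in blast)
  then show ?thesis by (simp add: P_apply)
qed

lemma dual_proj_dual_proj: "dual_proj u us B (dual_proj u us A xs) = dual_proj u us (A \<inter> B) xs"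
  by (rule blinfun_eqI) (simp add: dual_proj_apply basis_proj_basis_proj)

lemma dual_proj_subset: "A \<subseteq> B \<Longrightarrow> dual_proj u us B (dual_proj u us A xs) = dual_proj u us A xs"
  by (simp add: dual_proj_dual_proj Int_absorb2)

lemma dual_proj_disjoint: "A \<inter> B = {} \<Longrightarrow> dual_proj u us B (dual_proj u us A xs) = 0"
  by (rule blinfun_eqI) (simp add: dual_proj_dual_proj dual_proj_apply basis_proj_def)

lemma dual_proj_uniformly_bounded:
  "\<exists>K\<ge>0. \<forall>B. bounded_linear (dual_proj u us B) \<and> (\<forall>xs. norm (dual_proj u us B xs) \<le> K * norm xs)"
proof -
  obtain K where K: "K \<ge> 0" "\<And>B x. norm (basis_proj u us B x) \<le> K * norm x"
    using basis_proj_uniformly_bounded by blast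
  have bound: "norm (dual_proj u us B xs) \<le> K * norm xs" for B xs
  proof (rule norm_blinfun_bound)
    fix x
    have "norm (blinfun_apply xs (basis_proj u us B x)) \<le> norm xs * norm (basis_proj u us B x)"
      by (rule norm_blinfun)
    also have "\<dots> \<le> norm xs * (K * norm x)" by (intro mult_left_mono K(2)) simp
    finally show "norm (blinfun_apply (dual_proj u us B xs) x) \<le> K * norm xs * norm x"
      by (simp add: dual_proj_apply mult_ac)
  qed (use K in simp)
  have "bounded_linear (dual_proj u us B)" for B
  proof (rule bounded_linear_intro[of _ K])
    show "dual_proj u us B (b1 + b2) = dual_proj u us B b1 + dual_proj u us B b2" for b1 b2
      by (rule blinfun_eqI) (simp add: dual_proj_apply blinfun.add_left)
    show "dual_proj u us B (r *\<^sub>R b) = r *\<^sub>R dual_proj u us B b" for r b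
      by (rule blinfun_eqI) (simp add: dual_proj_apply blinfun.scaleR_left)
  qed (simp add: bound mult.commute)
  then show ?thesis using bound K(1) by blast
qed

lemma dual_proj_sign_change:
  fixes A :: "nat \<Rightarrow> nat set" and a :: "nat \<Rightarrow> real"
  assumes "disjoint_family A"
    and bl: "\<And>B. bounded_linear (dual_proj u us B)"
    and bound: "\<And>B xs. norm (dual_proj u us B xs) \<le> K * norm xs"
  obtains T where "bounded_linear T" "\<And>w. norm (T w) \<le> 2 * K * norm w"
    "\<And>j xs. a j *\<^sub>R T (dual_proj u us (A j) xs) = \<bar>a j\<bar> *\<^sub>R dual_proj u us (A j) xs"
proof
  define B where "B = (\<Union>j\<in>{j. a j > 0}. A j)"
  define D where "D = (\<Union>j\<in>{j. \<not> a j > 0}. A j)"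
  define T where "T w = dual_proj u us B w - dual_proj u us D w" for w
  show "bounded_linear T"
    unfolding T_def by (intro bounded_linear_sub bl)
  show "norm (T w) \<le> 2 * K * norm w" for w
  proof -
    have "norm (T w) \<le> norm (dual_proj u us B w) + norm (dual_proj u us D w)"
      unfolding T_def by (rule norm_triangle_ineq4)
    also have "\<dots> \<le> K * norm w + K * norm w" by (intro add_mono bound)
    finally show ?thesis by simp
  qed
  have disj: "j = k" if "x \<in> A j" "x \<in> A k" for x j k
    using assms(1) that by (auto simp: disjoint_family_on_def)
  show "a j *\<^sub>R T (dual_proj u us (A j) xs) = \<bar>a j\<bar> *\<^sub>R dual_proj u us (A j) xs" for j xs
  proof (cases "a j > 0")
    case True
    then have "A j \<subseteq> B" "A j \<inter> D = {}"
      by (auto simp: B_def D_def dest: disj)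
    then show ?thesis using True by (simp add: T_def dual_proj_subset dual_proj_disjoint)
  next
    case False
    then have "A j \<subseteq> D" "A j \<inter> B = {}"
      by (auto simp: B_def D_def dest: disj)
    then show ?thesis using False by (simp add: T_def dual_proj_subset dual_proj_disjoint)
  qed
qed

lemma functional_lower_bound_block_sum:
  fixes A :: "nat \<Rightarrow> nat set" and a :: "nat \<Rightarrow> real" and \<psi> :: "('u \<Rightarrow>\<^sub>L real) \<Rightarrow> real"
  assumes "disjoint_family A"
    and bl: "\<And>B. bounded_linear (dual_proj u us B)"
    and bound: "\<And>B xs. norm (dual_proj u us B xs) \<le> K * norm xs"
    and psi: "bounded_linear \<psi>"
    and a: "summable (\<lambda>j. \<bar>a j\<bar>)" "(\<Sum>j. \<bar>a j\<bar>) = 1"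
    and s: "(\<lambda>j. a j *\<^sub>R dual_proj u us (A j) (xs j)) sums s"
    and large: "\<And>j. \<psi> (dual_proj u us (A j) (xs j)) > \<eta>"
  shows "\<eta> \<le> 2 * K * onorm \<psi> * norm s"
proof -
  obtain T where T: "bounded_linear T" "\<And>w. norm (T w) \<le> 2 * K * norm w"
    "\<And>j xs. a j *\<^sub>R T (dual_proj u us (A j) xs) = \<bar>a j\<bar> *\<^sub>R dual_proj u us (A j) xs"
    using dual_proj_sign_change[OF assms(1) bl bound] by blast
  have "(\<lambda>j. \<psi> (T (a j *\<^sub>R dual_proj u us (A j) (xs j)))) sums \<psi> (T s)"
    by (rule bounded_linear.sums[OF bounded_linear_compose[OF psi T(1)] s])
  moreover have "\<psi> (T (a j *\<^sub>R dual_proj u us (A j) (xs j)))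
      = \<bar>a j\<bar> * \<psi> (dual_proj u us (A j) (xs j))" for j
    using T(3) linear_scale[OF bounded_linear.linear[OF T(1)]]
      linear_scale[OF bounded_linear.linear[OF psi]]
    by simp
  ultimately have \<psi>_sum: "(\<lambda>j. \<bar>a j\<bar> * \<psi> (dual_proj u us (A j) (xs j))) sums \<psi> (T s)"
    by simp
  have \<eta>_sum: "(\<lambda>j. \<bar>a j\<bar> * \<eta>) sums \<eta>"
    using sums_mult2[OF summable_sums[OF a(1)], of \<eta>] a(2) by simp
  have "\<eta> \<le> \<psi> (T s)"
    by (rule sums_le[OF _ \<eta>_sum \<psi>_sum]) (intro mult_left_mono less_imp_le[OF large], simp)
  also have "\<dots> \<le> onorm \<psi> * norm (T s)" using onorm[OF psi, of "T s"] by simp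
  also have "\<dots> \<le> onorm \<psi> * (2 * K * norm s)"
    using T(2)[of s] onorm_pos_le[OF psi] by (rule mult_left_mono)
  finally show ?thesis by (simp add: mult_ac)
qed

end

lemma linear_exists_unit_gt_of_abs_gt:
  assumes "linear f" and "norm x \<le> 1" and "\<bar>f x\<bar> > (\<eta>::real)"
  shows "\<exists>x'. norm x' \<le> 1 \<and> f x' > \<eta>"
proof (cases "f x > \<eta>")
  case False
  then have "f (- x) > \<eta>" using assms by (simp add: linear_neg)
  then show ?thesis using assms(2) by (intro exI[of _ "- x"]) simp
qed (use assms in blast)

theorem condition_C_small_dual_proj:
  fixes u :: "nat \<Rightarrow> 'u::banach" and us :: "nat \<Rightarrow> ('u \<Rightarrow>\<^sub>L real)"
    and \<psi> :: "('u \<Rightarrow>\<^sub>L real) \<Rightarrow> real"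
  assumes basis: "unconditional_basis u us" and C: "condition_C u us"
    and psi: "bounded_linear \<psi>" and "infinite \<Lambda>" and "\<eta> > 0"
  shows "\<exists>J\<subseteq>\<Lambda>. infinite J \<and> (\<forall>x. norm x \<le> 1 \<longrightarrow> \<bar>\<psi> (dual_proj u us J x)\<bar> \<le> \<eta>)"
proof -
  obtain K where K: "K \<ge> 0" "\<And>B. bounded_linear (dual_proj u us B)"
    "\<And>B xs. norm (dual_proj u us B xs) \<le> K * norm xs"
    using dual_proj_uniformly_bounded[OF basis] by blast
  define \<theta> where "\<theta> = \<eta> / (2 * K * onorm \<psi> + 1)"
  have "0 \<le> 2 * K * onorm \<psi>" using K(1) onorm_pos_le[OF psi] by simp
  then have "\<theta> > 0" and \<theta>_small: "2 * K * onorm \<psi> * \<theta> < \<eta>"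
    using \<open>\<eta> > 0\<close> by (auto simp: \<theta>_def field_simps)
  obtain A where A: "\<And>j. A j \<subseteq> \<Lambda> \<and> infinite (A j)" "disjoint_family A"
    and convex: "\<And>xs. (\<forall>j. norm (xs j) \<le> 1) \<Longrightarrow> \<exists>a s. summable (\<lambda>j. \<bar>a j\<bar>) \<and> (\<Sum>j. \<bar>a j\<bar>) = 1 \<and>
        (\<lambda>j. a j *\<^sub>R dual_proj u us (A j) (xs j)) sums s \<and> norm s \<le> \<theta>"
    using C[unfolded condition_C_def, rule_format, OF conjI[OF \<open>infinite \<Lambda>\<close> \<open>\<theta> > 0\<close>]]
    by blast
  have linear_\<psi>_proj: "linear (\<lambda>x. \<psi> (dual_proj u us B x))" for B
    using bounded_linear_compose[OF psi K(2)] by (rule bounded_linear.linear)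
  show ?thesis
  proof (rule ccontr)
    assume "\<not> ?thesis"
    then have "\<exists>x. norm x \<le> 1 \<and> \<bar>\<psi> (dual_proj u us (A j) x)\<bar> > \<eta>" for j
      using A(1)[of j] by (auto simp: not_le)
    then have "\<forall>j. \<exists>x. norm x \<le> 1 \<and> \<psi> (dual_proj u us (A j) x) > \<eta>"
      using linear_exists_unit_gt_of_abs_gt[OF linear_\<psi>_proj] by blast
    then obtain xs where xs: "\<And>j. norm (xs j) \<le> 1" "\<And>j. \<psi> (dual_proj u us (A j) (xs j)) > \<eta>"
      by metis
    obtain a s where a: "summable (\<lambda>j. \<bar>a j\<bar>)" "(\<Sum>j. \<bar>a j\<bar>) = 1"
      and s: "(\<lambda>j. a j *\<^sub>R dual_proj u us (A j) (xs j)) sums s" "norm s \<le> \<theta>"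
      using convex[of xs] xs(1) by blast
    have "\<eta> \<le> 2 * K * onorm \<psi> * norm s"
      using functional_lower_bound_block_sum[OF basis A(2) K(2,3) psi a s(1) xs(2)] .
    also have "\<dots> \<le> 2 * K * onorm \<psi> * \<theta>"
      using s(2) \<open>0 \<le> 2 * K * onorm \<psi>\<close> by (rule mult_left_mono)
    finally show False using \<theta>_small by simp
  qed
qed

definition lp_single :: "nat \<Rightarrow> 'a::real_normed_vector \<Rightarrow> nat \<Rightarrow> 'a" where
  "lp_single i z = (\<lambda>n. if n = i then z else 0)"

lemma ereal_ge_1_cases:
  assumes "1 \<le> (p::ereal)"
  obtains "p = \<infinity>" | q where "p = ereal q" "1 \<le> q"
  using assms by (cases p) auto

lemma powr_lp_single: "0 < q \<Longrightarrow> (\<lambda>n. norm (lp_single i z n) powr q) = (\<lambda>n. if n = i then norm z powr q else 0)"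
  by (auto simp: lp_single_def)

lemma bounded_range_norm_lp_single: "bounded (range (\<lambda>n. norm (lp_single i z n)))"
  by (rule bounded_subset[of "{norm z, 0}"]) (auto simp: lp_single_def)

lemma lp_single_in_lp_space:
  assumes "1 \<le> p" shows "lp_single i z \<in> lp_space p"
  using assms
proof (cases rule: ereal_ge_1_cases)
  case (2 q)
  then show ?thesis
    using sums_single[of i "\<lambda>_. norm z powr q"] by (auto simp: lp_space_def powr_lp_single sums_iff)
qed (simp add: lp_space_def bounded_range_norm_lp_single)

lemma lp_norm_lp_single:
  assumes "1 \<le> p" shows "lp_norm p (lp_single i z) = norm z"
  using assms
proof (cases rule: ereal_ge_1_cases)
  case 1
  have "(SUP n. norm (lp_single i z n)) = norm z"
  proof (rule antisym)
    show "(SUP n. norm (lp_single i z n)) \<le> norm z" by (rule cSUP_least) (auto simp: lp_single_def)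
    have "norm (lp_single i z i) \<le> (SUP n. norm (lp_single i z n))"
      by (rule cSUP_upper[OF UNIV_I bounded_imp_bdd_above[OF bounded_range_norm_lp_single]])
    then show "norm z \<le> (SUP n. norm (lp_single i z n))"
      by (simp add: lp_single_def)
  qed
  then show ?thesis using 1 by (simp add: lp_norm_def)
next
  case (2 q)
  have "(\<Sum>n. norm (lp_single i z n) powr q) = norm z powr q"
    using 2 sums_single[of i "\<lambda>_. norm z powr q"] by (simp add: powr_lp_single sums_iff)
  then show ?thesis using 2 by (simp add: lp_norm_def powr_powr)
qed

lemma norm_le_lp_norm:
  assumes "1 \<le> p" "y \<in> lp_space p" shows "norm (y i) \<le> lp_norm p y"
  using assms(1)
proof (cases rule: ereal_ge_1_cases)
  case 1
  then have "bdd_above (range (\<lambda>n. norm (y n)))"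
    using assms(2) by (simp add: lp_space_def bounded_imp_bdd_above)
  then show ?thesis using 1 cSUP_upper[OF UNIV_I, of "\<lambda>n. norm (y n)" i] by (simp add: lp_norm_def)
next
  case (2 q)
  then have "summable (\<lambda>n. norm (y n) powr q)" using assms(2) by (simp add: lp_space_def)
  then have "norm (y i) powr q \<le> (\<Sum>n. norm (y n) powr q)"
    using sum_le_suminf[of "\<lambda>n. norm (y n) powr q" "{i}"] by simp
  then have "(norm (y i) powr q) powr (1/q) \<le> (\<Sum>n. norm (y n) powr q) powr (1/q)"
    using 2 by (intro powr_mono2) auto
  then show ?thesis using 2 by (simp add: lp_norm_def powr_powr)
qed

lemma bounded_linear_lp_dual_lp_single:
  fixes \<phi> :: "(nat \<Rightarrow> 'a::real_normed_vector) \<Rightarrow> real"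
  assumes p: "1 \<le> p" and phi: "lp_dual p \<phi>"
  shows "bounded_linear (\<lambda>z. \<phi> (lp_single i z))"
proof -
  obtain C where C: "\<forall>y\<in>lp_space p. \<bar>\<phi> y\<bar> \<le> C * lp_norm p y"
    using phi by (auto simp: lp_dual_def)
  have lin: "\<forall>y\<in>lp_space p. \<forall>z\<in>lp_space p. \<phi> (\<lambda>n. y n + z n) = \<phi> y + \<phi> z"
    "\<forall>y\<in>lp_space p. \<forall>c. \<phi> (\<lambda>n. c *\<^sub>R y n) = c * \<phi> y"
    using phi by (auto simp: lp_dual_def)
  show ?thesis
  proof (rule bounded_linear_intro[of _ C])
    show "\<phi> (lp_single i (a + b)) = \<phi> (lp_single i a) + \<phi> (lp_single i b)" for a b
    proof -
      have "(\<lambda>n. lp_single i a n + lp_single i b n) = lp_single i (a + b)"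
        by (auto simp: lp_single_def)
      then show ?thesis using lin(1) lp_single_in_lp_space[OF p] by metis
    qed
    show "\<phi> (lp_single i (c *\<^sub>R a)) = c *\<^sub>R \<phi> (lp_single i a)" for a c
    proof -
      have "(\<lambda>n. c *\<^sub>R lp_single i a n) = lp_single i (c *\<^sub>R a)"
        by (auto simp: lp_single_def)
      then show ?thesis using lin(2) lp_single_in_lp_space[OF p] by (metis real_scaleR_def)
    qed
    show "norm (\<phi> (lp_single i z)) \<le> norm z * C" for z
    proof -
      have "\<bar>\<phi> (lp_single i z)\<bar> \<le> C * lp_norm p (lp_single i z)"
        using C lp_single_in_lp_space[OF p] by blast
      then show ?thesis by (simp add: lp_norm_lp_single[OF p] mult.commute)
    qed
  qed
qed

text \<open>Only unconditionality of \<open>(u\<^sub>j)\<close> and condition (C) are used.\<close>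

theorem lemma5p2:
  fixes u :: "nat \<Rightarrow> 'u::banach"
    and us :: "nat \<Rightarrow> ('u \<Rightarrow>\<^sub>L real)"
    and p :: ereal
    and \<Lambda> :: "nat \<Rightarrow> nat set"
    and \<phi> :: "(nat \<Rightarrow> ('u \<Rightarrow>\<^sub>L real)) \<Rightarrow> real"
    and \<eta> :: real
  assumes u_norm: "\<forall>j. norm (u j) = 1"
    and u_basis: "unconditional_basis u us"
    and us_norm: "\<forall>j. norm (us j) = 1"
    and us_wstar: "weak_star_schauder_basis u us"
    and us_unc: "weak_star_unconditional u us"
    and C: "condition_C u us"
    and p: "1 \<le> p"
    and Lam: "\<forall>i. infinite (\<Lambda> i)"
    and phi: "lp_dual p \<phi>"
    and eta: "\<eta> > 0"
  shows "\<exists>\<J> :: nat \<Rightarrow> nat set. (\<forall>i. \<J> i \<subseteq> \<Lambda> i \<and> infinite (\<J> i)) \<and>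
           (\<forall>i. \<forall>y\<in>lp_space p. lp_norm p y \<le> 1 \<longrightarrow> \<bar>\<phi> (R_op u us i (\<J> i) y)\<bar> \<le> \<eta>)"
proof -
  have "\<forall>i. \<exists>J\<subseteq>\<Lambda> i. infinite J \<and> (\<forall>x. norm x \<le> 1 \<longrightarrow> \<bar>\<phi> (lp_single i (dual_proj u us J x))\<bar> \<le> \<eta>)"
    using condition_C_small_dual_proj[OF u_basis C bounded_linear_lp_dual_lp_single[OF p phi] _ eta] Lam
    by blast
  then obtain \<J> where \<J>: "\<And>i. \<J> i \<subseteq> \<Lambda> i \<and> infinite (\<J> i)"
    and small: "\<And>i x. norm x \<le> 1 \<Longrightarrow> \<bar>\<phi> (lp_single i (dual_proj u us (\<J> i) x))\<bar> \<le> \<eta>"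
    by metis
  have "\<bar>\<phi> (R_op u us i (\<J> i) y)\<bar> \<le> \<eta>" if "y \<in> lp_space p" "lp_norm p y \<le> 1" for i y
  proof -
    have "R_op u us i (\<J> i) y = lp_single i (dual_proj u us (\<J> i) (y i))"
      by (simp add: R_op_def lp_single_def)
    moreover have "norm (y i) \<le> 1" using norm_le_lp_norm[OF p that(1), of i] that(2) by linarith
    ultimately show ?thesis using small by simp
  qed
  then show ?thesis using \<J> by blast
qed

end
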